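(* Suppose $x,x'\in(0,1)$ and $y\in(x,1)$. Let $y'\in(x',1)$ be such that $p_{x',1}(y')=p_{x,1}(y)$. Then $$p_{1,0}(x')-p_{1,0}(x)=p_{y',0}(x')-p_{y,0}(x).$$
   Context: For real $p\neq q$ and $w$ strictly between $p$ and $q$ (oriented interval $(p,q)$, $p>q$ allowed), $p_{p,q}(w)=\ln\frac{w-p}{q-w}$. *)

theory Defs
  imports Complex_Main
begin

text \<open>The function p_{p,q}(w) = ln((w-p)/(q-w)), meaningful for p \<noteq> q and w strictly
  between p and q (the oriented interval (p,q), p > q allowed).\<close>
definition plog :: "real \<Rightarrow> real \<Rightarrow> real \<Rightarrow> real" where
  "plog p q w = ln ((w - p) / (q - w))"

end

theory Submission
  imports Defs
begin

text \<open>The value p_{p,1}(w) determines the relative position (w - p)/(1 - p) of w in (p,1)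
  through the logistic function, so the hypothesis gives (y'-x')/(1-x') = (y-x)/(1-x).
  Splitting p_{1,0} and p_{y,0} into differences of logarithms, both sides of the claim
  become ln of this ratio taken at the primed and unprimed points.\<close>

lemma plog_eq_ln_diff:
  assumes "q < w" "w < p"
  shows "plog p q w = ln (p - w) - ln (w - q)"
proof -
  have "(w - p) / (q - w) = (p - w) / (w - q)"
    by (smt (verit) minus_divide_divide diff_0 minus_diff_eq)
  then show ?thesis
    using assms by (simp add: plog_def ln_div)
qed

lemma relative_position_plog:
  assumes "p < w" "w < q"
  shows "(w - p) / (q - p) = exp (plog p q w) / (1 + exp (plog p q w))"
proof -
  have "exp (plog p q w) = (w - p) / (q - w)"
    using assms by (simp add: plog_def)
  moreover have "1 + (w - p) / (q - w) = (q - p) / (q - w)"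
    using assms by (simp add: field_simps)
  ultimately show ?thesis
    using assms by simp
qed

theorem proposition2p5:
  fixes x x' y y' :: real
  assumes "0 < x" "x < 1" "0 < x'" "x' < 1"
    and "x < y" "y < 1"
    and "x' < y'" "y' < 1"
    and "plog x' 1 y' = plog x 1 y"
  shows "plog 1 0 x' - plog 1 0 x = plog y' 0 x' - plog y 0 x"
proof -
  have "(y' - x') / (1 - x') = (y - x) / (1 - x)"
    using assms relative_position_plog[of x' y' 1] relative_position_plog[of x y 1] by simp
  then have "ln (y' - x') - ln (1 - x') = ln (y - x) - ln (1 - x)"
    using assms ln_div[of "y' - x'" "1 - x'"] ln_div[of "y - x" "1 - x"] by simp
  then show ?thesis
    using assms by (simp add: plog_eq_ln_diff)
qed

end
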